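(* Let $a_1,a_2,\dots$ be complex numbers, and let $r,k\geq0$ and $n$ be integers. Then $\mathcal{A}_{n,k}(a_{r+1},a_{r+2},\dots)$ equals \[ \sum_{j_1+j_2+\cdots+j_{r+1}=k}\binom{k}{j_1,j_2,\dots,j_{r+1}}(-a_1)^{j_1}(-a_2)^{j_2}\cdots(-a_r)^{j_r}\,\mathcal{A}_{n+J+rj_{r+1},\,j_{r+1}}(a_1,a_2,\dots), \] where $J=(r-1)j_1+(r-2)j_2+\cdots+1\cdot j_{r-1}$ and the sum is over all $j_1,\dots,j_{r+1}\in\mathbb{Z}_{\geq0}$ with sum $k$.
   Context: For integers $n$ and $k\geq0$ and a sequence $b_1,b_2,\dots$, the De Moivre polynomial $\mathcal{A}_{n,k}(b_1,b_2,\dots)$ is the coefficient of $x^n$ in $(b_1x+b_2x^2+b_3x^3+\cdots)^k$ (so $\mathcal{A}_{0,0}=1$ and $\mathcal{A}_{n,k}=0$ for $n<k$). $\binom{k}{j_1,\dots,j_{r+1}}$ is the multinomial coefficient. *)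

theory Defs
  imports Complex_Main "HOL-Computational_Algebra.Formal_Power_Series"
begin

definition demoivre_series :: "(nat \<Rightarrow> complex) \<Rightarrow> complex fps" where
  "demoivre_series b = Abs_fps (\<lambda>i. if i = 0 then 0 else b i)"

text \<open>De Moivre polynomial A_{n,k}(b_1,b_2,...): coefficient of x^n in
  (b_1 x + b_2 x^2 + ...)^k; for negative n it is 0.\<close>
definition demoivre :: "int \<Rightarrow> nat \<Rightarrow> (nat \<Rightarrow> complex) \<Rightarrow> complex" where
  "demoivre n k b = (if n < 0 then 0 else fps_nth (demoivre_series b ^ k) (nat n))"

definition multinomial_coeff :: "nat \<Rightarrow> (nat \<Rightarrow> nat) \<Rightarrow> nat set \<Rightarrow> nat" where
  "multinomial_coeff k j I = fact k div (\<Prod>i\<in>I. fact (j i))"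

text \<open>Index set of tuples (j_1,...,j_m) of nonnegative integers with sum k,
  represented as functions vanishing outside {1..m}.\<close>
definition compositions :: "nat \<Rightarrow> nat \<Rightarrow> (nat \<Rightarrow> nat) set" where
  "compositions m k = {j. (\<forall>i. i \<notin> {1..m} \<longrightarrow> j i = 0) \<and> (\<Sum>i=1..m. j i) = k}"

end

theory Submission imports Defs begin

text \<open>Let \<open>A(x) = \<Sum>\<^sub>i a\<^sub>i x\<^sup>i\<close> and let \<open>B\<close> be the series of the shifted sequence, so that
  \<open>x\<^sup>r B(x) = A(x) - a\<^sub>1 x - \<dots> - a\<^sub>r x\<^sup>r\<close>. Expanding \<open>(x\<^sup>r B(x))\<^sup>k\<close> by the multinomial
  theorem, the term indexed by \<open>j\<close> is its coefficient times \<open>x\<^sup>D A(x)\<^bsup>j\<^sub>r\<^sub>+\<^sub>1\<^esup>\<close> with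
  \<open>D = \<Sum>\<^sub>i\<^sub>\<le>\<^sub>r i j\<^sub>i\<close>. Comparing coefficients of \<open>x\<^bsup>n + r k\<^esup>\<close> gives the identity, because
  \<open>n + r k - D = n + J + r j\<^sub>r\<^sub>+\<^sub>1\<close>.\<close>

unbundle fps_syntax

lemma compositions_0: "compositions 0 k = (if k = 0 then {\<lambda>_. 0} else {})"
  unfolding compositions_def by auto

lemma finite_compositions: "finite (compositions m k)"
proof (rule finite_subset)
  show "compositions m k \<subseteq>
      {f. \<forall>x. (x \<in> {1..m} \<longrightarrow> f x \<in> {..k}) \<and> (x \<notin> {1..m} \<longrightarrow> f x = 0)}"
    using member_le_sum[of _ "{1..m}"] by (fastforce simp: compositions_def)
  show "finite {f. \<forall>x. (x \<in> {1..m} \<longrightarrow> f x \<in> {..k}) \<and> (x \<notin> {1..m} \<longrightarrow> f x = (0::nat))}"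
    by (rule finite_set_of_finite_funs) auto
qed

lemma bij_betw_compositions_Suc:
  "bij_betw (\<lambda>(t, j). j(Suc m := t))
     (SIGMA t:{..k}. compositions m (k - t)) (compositions (Suc m) k)"
proof (rule bij_betwI[where g = "\<lambda>j. (j (Suc m), j(Suc m := 0))"])
  have sum_upd: "(\<Sum>i=1..m. (j(Suc m := t)) i) = (\<Sum>i=1..m. j i)" for j :: "nat \<Rightarrow> nat" and t
    by (rule sum.cong) auto
  show "(\<lambda>(t, j). j(Suc m := t)) \<in> (SIGMA t:{..k}. compositions m (k - t)) \<rightarrow> compositions (Suc m) k"
    using sum_upd by (fastforce simp: compositions_def)
  show "(\<lambda>j. (j (Suc m), j(Suc m := 0))) \<in> compositions (Suc m) k \<rightarrow> (SIGMA t:{..k}. compositions m (k - t))"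
    using sum_upd by (fastforce simp: compositions_def)
  show "(\<lambda>j. (j (Suc m), j(Suc m := 0))) ((\<lambda>(t, j). j(Suc m := t)) x) = x"
    if "x \<in> (SIGMA t:{..k}. compositions m (k - t))" for x
    using that unfolding compositions_def by auto
qed simp

lemma prod_fact_dvd_fact_sum:
  "finite I \<Longrightarrow> (\<Prod>i\<in>I. fact (j i) :: nat) dvd fact (\<Sum>i\<in>I. j i)"
proof (induction I rule: finite_induct)
  case (insert x F)
  have "fact (j x) * (\<Prod>i\<in>F. fact (j i)) dvd fact (j x) * (fact (sum j F) :: nat)"
    using insert.IH by (rule mult_dvd_mono[OF dvd_refl])
  also have "\<dots> dvd fact (j x + sum j F)"
    by (rule fact_fact_dvd_fact)
  finally show ?case
    using insert.hyps by simp
qed simp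

lemma multinomial_coeff_mult_prod_fact:
  "finite I \<Longrightarrow> multinomial_coeff (\<Sum>i\<in>I. j i) j I * (\<Prod>i\<in>I. fact (j i)) = fact (\<Sum>i\<in>I. j i)"
  unfolding multinomial_coeff_def by (simp add: prod_fact_dvd_fact_sum)

lemma multinomial_coeff_Suc:
  assumes t: "t \<le> k" and j: "j \<in> compositions m (k - t)"
  shows "multinomial_coeff k (j(Suc m := t)) {1..Suc m} =
    (k choose t) * multinomial_coeff (k - t) j {1..m}"
proof -
  define P where "P = (\<Prod>i=1..m. fact (j i) :: nat)"
  have sum_j: "(\<Sum>i=1..m. j i) = k - t"
    using j by (simp add: compositions_def)
  have "(\<Prod>i=1..Suc m. fact ((j(Suc m := t)) i)) = P * fact t"
  proof -
    have "(\<Prod>i=1..m. fact ((j(Suc m := t)) i)) = P"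
      unfolding P_def by (rule prod.cong) auto
    then show ?thesis by simp
  qed
  then have lhs: "multinomial_coeff k (j(Suc m := t)) {1..Suc m} = fact k div (P * fact t)"
    by (simp only: multinomial_coeff_def)
  have "(k choose t) * multinomial_coeff (k - t) j {1..m} * (P * fact t)
      = (k choose t) * fact t * (multinomial_coeff (k - t) j {1..m} * P)"
    by (simp only: ac_simps)
  also have "\<dots> = (k choose t) * fact t * fact (k - t)"
    using multinomial_coeff_mult_prod_fact[of "{1..m}" j] by (simp only: sum_j P_def finite_atLeastAtMost)
  also have "\<dots> = fact k"
    using binomial_fact_lemma[OF t] by (simp only: ac_simps)
  finally have "(k choose t) * multinomial_coeff (k - t) j {1..m} * (P * fact t) = fact k" .
  moreover have "P * fact t \<noteq> 0"
    by (simp add: P_def)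
  ultimately show ?thesis
    unfolding lhs by (metis nonzero_mult_div_cancel_right)
qed

lemma multinomial_ring:
  fixes f :: "nat \<Rightarrow> 'a :: comm_semiring_1"
  shows "(\<Sum>i=1..m. f i) ^ k =
    (\<Sum>j\<in>compositions m k. of_nat (multinomial_coeff k j {1..m}) * (\<Prod>i=1..m. f i ^ j i))"
proof (induction m arbitrary: k)
  case 0
  then show ?case by (simp add: compositions_0 multinomial_coeff_def power_0_left)
next
  case (Suc m)
  define summand where
    "summand j = of_nat (multinomial_coeff k j {1..Suc m}) * (\<Prod>i=1..Suc m. f i ^ j i)" for j
  have summand_upd: "summand (j(Suc m := t)) = of_nat (k choose t) * f (Suc m) ^ t *
      (of_nat (multinomial_coeff (k - t) j {1..m}) * (\<Prod>i=1..m. f i ^ j i))"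
    if "t \<le> k" "j \<in> compositions m (k - t)" for t j
  proof -
    have "(\<Prod>i=1..m. f i ^ (j(Suc m := t)) i) = (\<Prod>i=1..m. f i ^ j i)"
      by (rule prod.cong) auto
    then show ?thesis
      using multinomial_coeff_Suc[OF that] by (simp add: summand_def ac_simps)
  qed
  have "(\<Sum>i=1..Suc m. f i) ^ k = (f (Suc m) + (\<Sum>i=1..m. f i)) ^ k"
    by (simp add: add.commute)
  also have "\<dots> = (\<Sum>t\<le>k. of_nat (k choose t) * f (Suc m) ^ t * (\<Sum>i=1..m. f i) ^ (k - t))"
    by (rule binomial_ring)
  also have "\<dots> = (\<Sum>t\<le>k. \<Sum>j\<in>compositions m (k - t). of_nat (k choose t) * f (Suc m) ^ t *
      (of_nat (multinomial_coeff (k - t) j {1..m}) * (\<Prod>i=1..m. f i ^ j i)))"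
    by (simp only: Suc.IH sum_distrib_left)
  also have "\<dots> = (\<Sum>t\<le>k. \<Sum>j\<in>compositions m (k - t). summand (j(Suc m := t)))"
    by (intro sum.cong refl) (simp add: summand_upd)
  also have "\<dots> = (\<Sum>(t, j)\<in>(SIGMA t:{..k}. compositions m (k - t)). summand (j(Suc m := t)))"
    by (rule sum.Sigma) (auto simp: finite_compositions)
  also have "\<dots> = (\<Sum>j\<in>compositions (Suc m) k. summand j)"
    using sum.reindex_bij_betw[OF bij_betw_compositions_Suc, of summand]
    by (simp add: case_prod_unfold)
  finally show ?case by (simp add: summand_def)
qed

lemma fps_const_prod: "(\<Prod>i\<in>I. fps_const (c i)) = fps_const (\<Prod>i\<in>I. c i :: 'a :: comm_ring_1)"
  by (induction I rule: infinite_finite_induct) auto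

lemma fps_X_power_mult_demoivre_series_shift:
  "fps_X ^ r * demoivre_series (\<lambda>i. a (i + r)) =
    demoivre_series a + (\<Sum>i=1..r. fps_const (- a i) * fps_X ^ i)"
proof (rule fps_ext)
  fix n
  have "(\<Sum>i=1..r. (fps_const (- a i) * fps_X ^ i) $ n) = (\<Sum>i=1..r. if n = i then - a i else 0)"
    by (rule sum.cong) auto
  then show "(fps_X ^ r * demoivre_series (\<lambda>i. a (i + r))) $ n =
      (demoivre_series a + (\<Sum>i=1..r. fps_const (- a i) * fps_X ^ i)) $ n"
    by (auto simp: fps_sum_nth fps_X_power_mult_nth demoivre_series_def sum.delta)
qed

lemma demoivre_diff_eq_fps_nth:
  "demoivre (N - int d) k b =
    (if N < 0 then 0 else (fps_X ^ d * demoivre_series b ^ k) $ nat N)"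
  by (auto simp: demoivre_def fps_X_power_mult_nth nat_diff_distrib)

lemma fps_X_power_mult_demoivre_series_shift_power:
  "fps_X ^ (r * k) * demoivre_series (\<lambda>i. a (i + r)) ^ k =
    (\<Sum>j\<in>compositions (r + 1) k.
       fps_const (of_nat (multinomial_coeff k j {1..r+1}) * (\<Prod>i=1..r. (- a i) ^ j i)) *
       (fps_X ^ (\<Sum>i=1..r. i * j i) * demoivre_series a ^ j (r + 1)))"
proof -
  define f where
    "f i = (if i \<le> r then fps_const (- a i) * fps_X ^ i else demoivre_series a)" for i
  have sum_f: "(\<Sum>i=1..r+1. f i) = fps_X ^ r * demoivre_series (\<lambda>i. a (i + r))"
    by (simp add: fps_X_power_mult_demoivre_series_shift f_def)
  have prod_f: "(\<Prod>i=1..r+1. f i ^ j i) = fps_const (\<Prod>i=1..r. (- a i) ^ j i) *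
      (fps_X ^ (\<Sum>i=1..r. i * j i) * demoivre_series a ^ j (r + 1))" for j
  proof -
    have "(\<Prod>i=1..r. f i ^ j i) = (\<Prod>i=1..r. fps_const ((- a i) ^ j i) * fps_X ^ (i * j i))"
      by (rule prod.cong) (auto simp: f_def power_mult_distrib power_mult mult.commute)
    then show ?thesis
      by (simp add: f_def prod.distrib fps_const_prod power_sum)
  qed
  have "fps_X ^ (r * k) * demoivre_series (\<lambda>i. a (i + r)) ^ k = (\<Sum>i=1..r+1. f i) ^ k"
    by (simp only: sum_f power_mult_distrib power_mult)
  also have "\<dots> = (\<Sum>j\<in>compositions (r + 1) k.
      of_nat (multinomial_coeff k j {1..r+1}) * (\<Prod>i=1..r+1. f i ^ j i))"
    by (rule multinomial_ring)
  finally show ?thesis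
    by (simp only: prod_f fps_of_nat[symmetric] mult.assoc[symmetric] fps_const_mult)
qed

lemma compositions_index_shift:
  assumes "j \<in> compositions (r + 1) k"
  shows "n + int (\<Sum>i=1..r. (r - i) * j i) + int r * int (j (r + 1)) =
    (n + int (r * k)) - int (\<Sum>i=1..r. i * j i)"
proof -
  have weights: "(\<Sum>i=1..r. (r - i) * j i) + (\<Sum>i=1..r. i * j i) = r * (\<Sum>i=1..r. j i)"
    unfolding sum.distrib[symmetric] sum_distrib_left
    by (rule sum.cong) (auto simp: add_mult_distrib[symmetric])
  have "(\<Sum>i=1..r. j i) + j (r + 1) = k"
    using assms by (simp add: compositions_def)
  then have "r * k = r * (\<Sum>i=1..r. j i) + r * j (r + 1)"
    by (metis add_mult_distrib2)
  with weights have "(\<Sum>i=1..r. (r - i) * j i) + r * j (r + 1) + (\<Sum>i=1..r. i * j i) = r * k"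
    by linarith
  then have "int (\<Sum>i=1..r. (r - i) * j i) + int r * int (j (r + 1)) + int (\<Sum>i=1..r. i * j i)
      = int (r * k)"
    by (simp only: of_nat_add[symmetric] of_nat_mult[symmetric])
  then show ?thesis
    by linarith
qed

theorem proposition7p2:
  fixes a :: "nat \<Rightarrow> complex" and r k :: nat and n :: int
  shows "demoivre n k (\<lambda>i. a (i + r)) =
    (\<Sum>j\<in>compositions (r + 1) k.
       of_nat (multinomial_coeff k j {1..r+1}) *
       (\<Prod>i=1..r. (- a i) ^ j i) *
       demoivre (n + int (\<Sum>i=1..r. (r - i) * j i) + int r * int (j (r + 1))) (j (r + 1)) a)"
proof -
  define N where "N = n + int (r * k)"
  define c where "c j = of_nat (multinomial_coeff k j {1..r+1}) * (\<Prod>i=1..r. (- a i) ^ j i)"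
    for j
  define D where "D j = (\<Sum>i=1..r. i * j i)" for j :: "nat \<Rightarrow> nat"
  have "demoivre n k (\<lambda>i. a (i + r)) = demoivre (N - int (r * k)) k (\<lambda>i. a (i + r))"
    by (simp add: N_def)
  also have "\<dots> = (if N < 0 then 0 else
      (\<Sum>j\<in>compositions (r + 1) k. c j * (fps_X ^ D j * demoivre_series a ^ j (r + 1)) $ nat N))"
    unfolding demoivre_diff_eq_fps_nth fps_X_power_mult_demoivre_series_shift_power
    by (simp add: fps_sum_nth c_def D_def)
  also have "\<dots> = (\<Sum>j\<in>compositions (r + 1) k. c j * demoivre (N - int (D j)) (j (r + 1)) a)"
    by (simp add: demoivre_diff_eq_fps_nth)
  also have "\<dots> = (\<Sum>j\<in>compositions (r + 1) k. c j *
      demoivre (n + int (\<Sum>i=1..r. (r - i) * j i) + int r * int (j (r + 1))) (j (r + 1)) a)"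
    by (rule sum.cong[OF refl]) (simp only: compositions_index_shift N_def D_def)
  finally show ?thesis
    by (simp add: c_def)
qed

end
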